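(* Fix $\theta\in(0,1)$ and an integer $N\ge 1$ with $N \le \frac{1}{4\theta(1-\theta)}-1$. Then there exists a temperature $\tilde\tau>0$ (depending on $N$ and $\theta$) such that $$\mathrm{MSE}\big(\hat\nabla^{\mathsf{grad}}_{\tilde\tau,N}\big) < \mathrm{MSE}\big(\hat\nabla^{\mathsf{RF}}_{N}\big).$$ Moreover, for every fixed $N\ge1$ and $\theta=1/k$ with $k\to\infty$, one has $\mathrm{MSE}(\hat\nabla^{\mathsf{RF}}_{N})=\Omega(k)$, while for each such $\theta$ there is $\tilde\tau>0$ with $\mathrm{MSE}(\hat\nabla^{\mathsf{grad}}_{\tilde\tau,N})<4$. The same holds for $\theta=1-1/k$, $k\to\infty$.
   Context: Binary action setting: actions $A\in\{-1,1\}$ are drawn from the policy $\pi_\theta$ with $\pi_\theta(-1)=\theta$, $\pi_\theta(1)=1-\theta$, for a parameter $\theta\in(0,1)$. Let $G(a)=a$ and $H(\theta)=\mathbb{E}_{A\sim\pi_\theta}[G(A)]$, so the true gradient is $\nabla_\theta H(\theta)=\frac{d}{d\theta}H(\theta)$. REINFORCE estimator: given $N$ i.i.d. samples $A_1,\dots,A_N\sim\pi_\theta$, $\hat\nabla^{\mathsf{RF}}_N=\frac1N\sum_{i=1}^N G(A_i)\,\nabla_\theta\log\pi_\theta(A_i)$. Smoothed pathwise estimator: for temperature $\tau>0$ and $U\sim\mathrm{Uniform}[0,1]$ let $h_\tau(U,\theta)=\frac{\exp((U-\theta)/\tau)-1}{\exp((U-\theta)/\tau)+1}$ (a smoothing of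 $2\mathbf{1}\{U>\theta\}-1$, which has the law of $A$). Given $N$ i.i.d. $U_1,\dots,U_N\sim\mathrm{Uniform}[0,1]$, $\hat\nabla^{\mathsf{grad}}_{\tau,N}=\frac1N\sum_{i=1}^N \nabla_\theta G(h_\tau(U_i,\theta))=\frac1N\sum_{i=1}^N \frac{\partial}{\partial\theta}h_\tau(U_i,\theta)$. For an estimator $\hat\nabla$, $\mathrm{MSE}(\hat\nabla)=\mathbb{E}\big[(\hat\nabla-\nabla_\theta H(\theta))^2\big]$. *)

theory Defs
  imports "HOL-Probability.Probability" "HOL-Library.Landau_Symbols"
begin

definition policy :: "real \<Rightarrow> real pmf" where
  "policy \<theta> = map_pmf (\<lambda>b. if b then -1 else 1) (bernoulli_pmf \<theta>)"

definition G :: "real \<Rightarrow> real" where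
  "G a = a"

definition H :: "real \<Rightarrow> real" where
  "H \<theta> = measure_pmf.expectation (policy \<theta>) G"

definition true_grad :: "real \<Rightarrow> real" where
  "true_grad \<theta> = deriv H \<theta>"

definition score :: "real \<Rightarrow> real \<Rightarrow> real" where
  "score \<theta> a = deriv (\<lambda>t. ln (pmf (policy t) a)) \<theta>"

definition rf_est :: "nat \<Rightarrow> real \<Rightarrow> (nat \<Rightarrow> real) \<Rightarrow> real" where
  "rf_est N \<theta> A = (1 / real N) * (\<Sum>i<N. G (A i) * score \<theta> (A i))"

definition mse_rf :: "nat \<Rightarrow> real \<Rightarrow> real" where
  "mse_rf N \<theta> = measure_pmf.expectation (Pi_pmf {..<N} 0 (\<lambda>_. policy \<theta>))
      (\<lambda>A. (rf_est N \<theta> A - true_grad \<theta>)\<^sup>2)"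

definition h :: "real \<Rightarrow> real \<Rightarrow> real \<Rightarrow> real" where
  "h \<tau> u \<theta> = (exp ((u - \<theta>) / \<tau>) - 1) / (exp ((u - \<theta>) / \<tau>) + 1)"

definition grad_est :: "real \<Rightarrow> nat \<Rightarrow> real \<Rightarrow> (nat \<Rightarrow> real) \<Rightarrow> real" where
  "grad_est \<tau> N \<theta> U = (1 / real N) * (\<Sum>i<N. deriv (\<lambda>t. G (h \<tau> (U i) t)) \<theta>)"

definition mse_grad :: "real \<Rightarrow> nat \<Rightarrow> real \<Rightarrow> real" where
  "mse_grad \<tau> N \<theta> = integral\<^sup>L (PiM {..<N} (\<lambda>_. uniform_measure lborel {0..1::real}))
      (\<lambda>U. (grad_est \<tau> N \<theta> U - true_grad \<theta>)\<^sup>2)"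

end

theory Submission imports Defs begin

text \<open>The REINFORCE samples \<open>G(A) * score(A)\<close> have mean \<open>-2\<close>, the true gradient, and variance
  \<open>1/(\<theta>(1-\<theta>)) - 4\<close>, so by independence the REINFORCE error is exactly \<open>(1/(\<theta>(1-\<theta>)) - 4)/N\<close>.
  This is at least 4 under the hypothesis on \<open>N\<close>, and of order \<open>k\<close> for \<open>\<theta> = 1/k\<close> or \<open>1 - 1/k\<close>.
  On the other hand each pathwise sample \<open>\<partial>h\<^sub>\<tau>/\<partial>\<theta>\<close> lies in \<open>[-1/(2\<tau>), 0)\<close>, so for \<open>\<tau> \<ge> 1/4\<close>
  the pathwise error lies in \<open>[0, 2)\<close> pointwise and its square has mean below 4.\<close>

lemma expectation_pair_pmf_finite:
  fixes g :: "'a \<times> 'b \<Rightarrow> real"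
  assumes "finite (set_pmf p)" "finite (set_pmf q)"
  shows "measure_pmf.expectation (pair_pmf p q) g =
         measure_pmf.expectation p (\<lambda>a. measure_pmf.expectation q (\<lambda>b. g (a, b)))"
proof -
  have "measure_pmf.expectation (pair_pmf p q) g =
        (\<Sum>z\<in>set_pmf p \<times> set_pmf q. pmf (pair_pmf p q) z *\<^sub>R g z)"
    using assms by (intro integral_measure_pmf) auto
  also have "\<dots> = (\<Sum>a\<in>set_pmf p. \<Sum>b\<in>set_pmf q. pmf p a * (pmf q b * g (a, b)))"
    by (subst sum.cartesian_product) (auto simp: pmf_pair mult.assoc intro!: sum.cong)
  also have "\<dots> = (\<Sum>a\<in>set_pmf p. pmf p a *\<^sub>R measure_pmf.expectation q (\<lambda>b. g (a, b)))"
    using assms by (simp add: integral_measure_pmf[of "set_pmf q"] sum_distrib_left)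
  also have "\<dots> = measure_pmf.expectation p (\<lambda>a. measure_pmf.expectation q (\<lambda>b. g (a, b)))"
    using assms by (intro integral_measure_pmf[symmetric]) auto
  finally show ?thesis .
qed

lemma finite_set_Pi_pmf_const:
  assumes "finite (set_pmf p)" "finite I"
  shows "finite (set_pmf (Pi_pmf I d (\<lambda>_. p)))"
  by (rule finite_subset[OF set_Pi_pmf_subset'[OF assms(2)]]) (use assms in auto)

lemma expectation_Pi_pmf_sum_square:
  fixes Y :: "'a \<Rightarrow> real"
  assumes fin: "finite (set_pmf p)" and centered: "measure_pmf.expectation p Y = 0"
    and "finite I"
  shows "measure_pmf.expectation (Pi_pmf I d (\<lambda>_. p)) (\<lambda>A. (\<Sum>i\<in>I. Y (A i))\<^sup>2)
           = real (card I) * measure_pmf.expectation p (\<lambda>a. (Y a)\<^sup>2)"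
  using \<open>finite I\<close>
proof (induction I rule: finite_induct)
  case (insert x I)
  define Q where "Q = Pi_pmf I d (\<lambda>_. p)"
  define S where "S = (\<lambda>f. \<Sum>i\<in>I. Y (f i))"
  have fin_Q: "finite (set_pmf Q)"
    unfolding Q_def using finite_set_Pi_pmf_const[OF fin insert.hyps(1)] .
  have int_Q: "integrable (measure_pmf Q) f" for f :: "_ \<Rightarrow> real"
    using fin_Q by (rule integrable_measure_pmf_finite)
  have int_p: "integrable (measure_pmf p) f" for f :: "_ \<Rightarrow> real"
    using fin by (rule integrable_measure_pmf_finite)
  have "measure_pmf.expectation Q S = (\<Sum>i\<in>I. measure_pmf.expectation (map_pmf (\<lambda>f. f i) Q) Y)"
    unfolding S_def by (simp add: Bochner_Integration.integral_sum int_Q)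
  also have "\<dots> = 0"
    using insert.hyps(1) centered by (simp add: Q_def Pi_pmf_component)
  finally have mean_S: "measure_pmf.expectation Q S = 0" .
  have sum_upd: "(\<Sum>i\<in>insert x I. Y ((f(x := y)) i)) = Y y + S f" for f y
  proof -
    have "(\<Sum>i\<in>I. Y ((f(x := y)) i)) = S f"
      unfolding S_def using insert.hyps(2) by (intro sum.cong) auto
    then show ?thesis using insert.hyps by simp
  qed
  have "measure_pmf.expectation (Pi_pmf (insert x I) d (\<lambda>_. p)) (\<lambda>A. (\<Sum>i\<in>insert x I. Y (A i))\<^sup>2)
      = measure_pmf.expectation (pair_pmf p Q) (\<lambda>(y, f). (Y y)\<^sup>2 + 2 * Y y * S f + (S f)\<^sup>2)"
    unfolding Q_def Pi_pmf_insert[OF insert.hyps] integral_map_pmf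
    by (intro arg_cong[where f="measure_pmf.expectation _"])
       (auto simp del: fun_upd_apply simp: sum_upd power2_sum S_def)
  also have "\<dots> = measure_pmf.expectation p
      (\<lambda>y. (Y y)\<^sup>2 + 2 * Y y * measure_pmf.expectation Q S + measure_pmf.expectation Q (\<lambda>f. (S f)\<^sup>2))"
    by (simp add: expectation_pair_pmf_finite[OF fin fin_Q] Bochner_Integration.integral_add[OF int_Q int_Q])
  also have "\<dots> = measure_pmf.expectation p (\<lambda>y. (Y y)\<^sup>2 + real (card I) * measure_pmf.expectation p (\<lambda>a. (Y a)\<^sup>2))"
    using insert.IH mean_S unfolding Q_def S_def by simp
  also have "\<dots> = real (card (insert x I)) * measure_pmf.expectation p (\<lambda>a. (Y a)\<^sup>2)"
    using insert.hyps by (simp add: Bochner_Integration.integral_add[OF int_p int_p] algebra_simps)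
  finally show ?case .
qed simp

lemma (in prob_space) integral_less_const:
  fixes f :: "'a \<Rightarrow> real"
  assumes "f \<in> borel_measurable M" "\<And>x. x \<in> space M \<Longrightarrow> 0 \<le> f x \<and> f x < c"
  shows "integral\<^sup>L M f < c"
proof -
  have "AE x in M. norm (f x) \<le> c"
    using assms(2) by (intro AE_I2) (smt (verit) real_norm_def)
  then have "integrable M f"
    using assms(1) by (rule integrable_const_bound)
  then have "integral\<^sup>L M f < integral\<^sup>L M (\<lambda>_. c)"
    by (intro integral_less_AE_space) (use assms emeasure_space_1 in auto)
  then show ?thesis by (simp add: prob_space)
qed

lemma pmf_policy:
  assumes "0 \<le> t" "t \<le> 1"
  shows "pmf (policy t) a = (if a = -1 then t else if a = 1 then 1 - t else 0)"
proof -
  have "(\<lambda>b. if b then -1 else (1::real)) -` {a} = (if a = -1 then {True} else if a = 1 then {False} else {})"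
    by (auto split: if_splits)
  then show ?thesis
    using assms by (auto simp: policy_def pmf_map measure_pmf_single)
qed

lemma set_pmf_policy: "set_pmf (policy t) \<subseteq> {-1, 1}"
  by (auto simp: policy_def)

lemma finite_set_pmf_policy: "finite (set_pmf (policy t))"
  using set_pmf_policy finite_subset by blast

lemma expectation_policy:
  assumes "0 \<le> t" "t \<le> 1"
  shows "measure_pmf.expectation (policy t) f = t * f (-1) + (1 - t) * f 1"
  using assms set_pmf_policy
  by (subst integral_measure_pmf_real[where A="{-1, 1}"]) (auto simp: pmf_policy)

lemma true_grad_eq:
  assumes "0 < \<theta>" "\<theta> < 1"
  shows "true_grad \<theta> = -2"
proof -
  have "((\<lambda>t. 1 - 2 * t) has_real_derivative -2) (at \<theta>)"
    by (auto intro!: derivative_eq_intros)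
  then have "(H has_real_derivative -2) (at \<theta>)"
    by (rule has_field_derivative_transform_within_open[where S="{0<..<1}"])
       (use assms in \<open>auto simp: H_def G_def expectation_policy\<close>)
  then show ?thesis unfolding true_grad_def by (rule DERIV_imp_deriv)
qed

lemma score_eq:
  assumes "0 < \<theta>" "\<theta> < 1"
  shows "score \<theta> a = (if a = -1 then 1 / \<theta> else if a = 1 then - 1 / (1 - \<theta>) else 0)"
proof -
  define g where "g = (\<lambda>t::real. if a = -1 then ln t else if a = 1 then ln (1 - t) else 0)"
  have "(g has_real_derivative (if a = -1 then 1 / \<theta> else if a = 1 then - 1 / (1 - \<theta>) else 0)) (at \<theta>)"
    unfolding g_def using assms by (auto intro!: derivative_eq_intros)
  then have "((\<lambda>t. ln (pmf (policy t) a)) has_real_derivative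
      (if a = -1 then 1 / \<theta> else if a = 1 then - 1 / (1 - \<theta>) else 0)) (at \<theta>)"
    by (rule has_field_derivative_transform_within_open[where S="{0<..<1}"])
       (use assms in \<open>auto simp: g_def pmf_policy\<close>)
  then show ?thesis unfolding score_def by (rule DERIV_imp_deriv)
qed

lemma mse_rf_eq:
  assumes "0 < \<theta>" "\<theta> < 1" "1 \<le> N"
  shows "mse_rf N \<theta> = (1 / (\<theta> * (1 - \<theta>)) - 4) / real N"
proof -
  define Y where "Y = (\<lambda>a. G a * score \<theta> a - true_grad \<theta>)"
  have Y: "Y (-1) = 2 - 1 / \<theta>" "Y 1 = 2 - 1 / (1 - \<theta>)"
    using assms by (auto simp: Y_def G_def score_eq true_grad_eq)
  have centered: "measure_pmf.expectation (policy \<theta>) Y = 0"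
    using assms by (simp add: expectation_policy Y field_simps)
  have square: "s * (2 - 1 / s)\<^sup>2 = 4 * s - 4 + 1 / s" if "s > 0" for s :: real
    using that by (simp add: power2_eq_square field_simps)
  have "1 / \<theta> + 1 / (1 - \<theta>) = 1 / (\<theta> * (1 - \<theta>))"
    using assms by (simp add: field_simps)
  then have variance: "measure_pmf.expectation (policy \<theta>) (\<lambda>a. (Y a)\<^sup>2) = 1 / (\<theta> * (1 - \<theta>)) - 4"
    using assms by (simp add: expectation_policy Y square)
  have error: "rf_est N \<theta> A - true_grad \<theta> = (\<Sum>i<N. Y (A i)) / real N" for A
    using assms unfolding rf_est_def Y_def by (simp add: sum_subtractf field_simps)
  have "mse_rf N \<theta> = measure_pmf.expectation (Pi_pmf {..<N} 0 (\<lambda>_. policy \<theta>))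
      (\<lambda>A. (\<Sum>i<N. Y (A i))\<^sup>2) / (real N)\<^sup>2"
    unfolding mse_rf_def error by (simp add: power_divide)
  also have "\<dots> = real N * (1 / (\<theta> * (1 - \<theta>)) - 4) / (real N)\<^sup>2"
    using expectation_Pi_pmf_sum_square[OF finite_set_pmf_policy centered, of "{..<N}" 0]
    by (simp add: variance)
  also have "\<dots> = (1 / (\<theta> * (1 - \<theta>)) - 4) / real N"
    using assms by (simp add: power2_eq_square)
  finally show ?thesis .
qed

definition h_deriv :: "real \<Rightarrow> real \<Rightarrow> real \<Rightarrow> real" where
  "h_deriv \<tau> u \<theta> = - 2 * exp ((u - \<theta>) / \<tau>) / (\<tau> * (exp ((u - \<theta>) / \<tau>) + 1)\<^sup>2)"

lemma has_real_derivative_h: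
  assumes "\<tau> \<noteq> 0"
  shows "((\<lambda>t. h \<tau> u t) has_real_derivative h_deriv \<tau> u \<theta>) (at \<theta>)"
proof -
  define e where "e = exp ((u - \<theta>) / \<tau>)"
  have "e + 1 \<noteq> 0" using exp_gt_zero[of "(u - \<theta>) / \<tau>"] unfolding e_def by linarith
  then have "((\<lambda>t. h \<tau> u t) has_real_derivative
      ((- e / \<tau>) * (e + 1) - (e - 1) * (- e / \<tau>)) / (e + 1)\<^sup>2) (at \<theta>)"
    using assms unfolding h_def e_def by (auto intro!: derivative_eq_intros simp: power2_eq_square)
  moreover have "((- e / \<tau>) * (e + 1) - (e - 1) * (- e / \<tau>)) / (e + 1)\<^sup>2 = h_deriv \<tau> u \<theta>"
    using assms unfolding h_deriv_def e_def[symmetric] by (simp add: field_simps)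
  ultimately show ?thesis by simp
qed

lemma h_deriv_bounds:
  assumes "0 < \<tau>"
  shows "- 1 / (2 * \<tau>) \<le> h_deriv \<tau> u \<theta> \<and> h_deriv \<tau> u \<theta> < 0"
proof -
  define e where "e = exp ((u - \<theta>) / \<tau>)"
  have "e > 0" unfolding e_def by simp
  have "4 * e \<le> (e + 1)\<^sup>2"
    using zero_le_power2[of "e - 1"] by (simp add: power2_eq_square algebra_simps)
  then show ?thesis
    using \<open>e > 0\<close> assms unfolding h_deriv_def e_def[symmetric] by (simp add: field_simps)
qed

lemma continuous_on_h_deriv:
  assumes "\<tau> \<noteq> 0"
  shows "continuous_on UNIV (\<lambda>u. h_deriv \<tau> u \<theta>)"
  unfolding h_deriv_def
proof (intro continuous_intros ballI)
  fix u :: real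
  have "exp ((u - \<theta>) / \<tau>) + 1 > 0" using exp_gt_zero[of "(u - \<theta>) / \<tau>"] by linarith
  then show "\<tau> * (exp ((u - \<theta>) / \<tau>) + 1)\<^sup>2 \<noteq> 0" using assms by simp
qed (use assms in auto)

lemma mse_grad_lt_4:
  assumes "0 < \<theta>" "\<theta> < 1" "1 \<le> N" "1 / 4 \<le> \<tau>"
  shows "mse_grad \<tau> N \<theta> < 4"
proof -
  define M where "M = PiM {..<N} (\<lambda>_. uniform_measure lborel {0..1::real})"
  interpret prob_space M
    unfolding M_def by (intro prob_space_PiM prob_space_uniform_measure) auto
  define mean where "mean = (\<lambda>U::nat \<Rightarrow> real. (\<Sum>i<N. h_deriv \<tau> (U i) \<theta>) / real N)"
  have error: "grad_est \<tau> N \<theta> U - true_grad \<theta> = mean U + 2" for U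
    using assms DERIV_imp_deriv[OF has_real_derivative_h]
    unfolding mean_def grad_est_def G_def by (simp add: true_grad_eq field_simps)
  have "- 2 \<le> - 1 / (2 * \<tau>)"
    using assms(4) by (simp add: field_simps)
  then have "h_deriv \<tau> u \<theta> \<in> {-2..<0}" for u
    using h_deriv_bounds[of \<tau> u \<theta>] assms(4) by auto
  then have error_range: "0 \<le> mean U + 2 \<and> mean U + 2 < 2" for U
    using sum_mono[of "{..<N}" "\<lambda>_. -2" "\<lambda>i. h_deriv \<tau> (U i) \<theta>"]
          sum_strict_mono[of "{..<N}" "\<lambda>i. h_deriv \<tau> (U i) \<theta>" "\<lambda>_. 0"] assms(3)
    by (auto simp: mean_def field_simps lessThan_empty_iff)
  have bound: "0 \<le> (mean U + 2)\<^sup>2 \<and> (mean U + 2)\<^sup>2 < 4" for U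
    using error_range[of U] power_strict_mono[of "mean U + 2" 2 2] by auto
  have "(\<lambda>u. h_deriv \<tau> u \<theta>) \<in> borel_measurable borel"
    using continuous_on_h_deriv assms(4) by (intro borel_measurable_continuous_onI) auto
  then have "(\<lambda>U. (mean U + 2)\<^sup>2) \<in> borel_measurable M"
    unfolding mean_def M_def by measurable
  then have "integral\<^sup>L M (\<lambda>U. (mean U + 2)\<^sup>2) < 4"
    using bound by (rule integral_less_const)
  then show ?thesis unfolding mse_grad_def error M_def .
qed

lemma mse_rf_ge_4:
  assumes "0 < \<theta>" "\<theta> < 1" "1 \<le> N" "real N \<le> 1 / (4 * \<theta> * (1 - \<theta>)) - 1"
  shows "4 \<le> mse_rf N \<theta>"
proof -
  define X where "X = 1 / (4 * \<theta> * (1 - \<theta>))"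
  have "1 / (\<theta> * (1 - \<theta>)) = 4 * X"
    unfolding X_def by simp
  then have "4 * real N \<le> 1 / (\<theta> * (1 - \<theta>)) - 4"
    using assms(4) unfolding X_def[symmetric] by linarith
  then show ?thesis
    using assms(3) by (simp add: mse_rf_eq[OF assms(1-3)] le_divide_eq)
qed

lemma mse_rf_bigomega:
  assumes "1 \<le> N"
    and "\<forall>\<^sub>F k in at_top. 0 < t k \<and> t k < 1 \<and> t k * (1 - t k) \<le> 1 / real k"
  shows "(\<lambda>k. mse_rf N (t k)) \<in> \<Omega>(\<lambda>k. real k)"
proof (rule landau_omega.bigI[of "1 / (2 * real N)"])
  show "0 < 1 / (2 * real N)" using assms(1) by simp
  show "\<forall>\<^sub>F k in at_top. 1 / (2 * real N) * norm (real k) \<le> norm (mse_rf N (t k))"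
    using assms(2) eventually_ge_at_top[of "8::nat"]
  proof eventually_elim
    case (elim k)
    then have "real k \<le> 1 / (t k * (1 - t k))"
      by (simp add: field_simps mult_pos_pos)
    then have half: "real k / 2 \<le> 1 / (t k * (1 - t k)) - 4"
      using elim by linarith
    then have "real k / 2 / real N \<le> (1 / (t k * (1 - t k)) - 4) / real N"
      by (rule divide_right_mono) simp
    moreover have "0 \<le> 1 / (t k * (1 - t k)) - 4"
      using half by linarith
    ultimately show ?case
      using elim assms(1) by (simp add: mse_rf_eq)
  qed
qed

theorem theorem1:
  shows "(\<forall>(\<theta>::real) (N::nat). 0 < \<theta> \<and> \<theta> < 1 \<and> 1 \<le> N \<and>
            real N \<le> 1 / (4 * \<theta> * (1 - \<theta>)) - 1 \<longrightarrow>
            (\<exists>\<tau>>0. mse_grad \<tau> N \<theta> < mse_rf N \<theta>))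
       \<and> (\<forall>N::nat. 1 \<le> N \<longrightarrow>
            (\<lambda>k::nat. mse_rf N (1 / real k)) \<in> \<Omega>(\<lambda>k. real k)
          \<and> (\<forall>k::nat. 2 \<le> k \<longrightarrow> (\<exists>\<tau>>0. mse_grad \<tau> N (1 / real k) < 4))
          \<and> (\<lambda>k::nat. mse_rf N (1 - 1 / real k)) \<in> \<Omega>(\<lambda>k. real k)
          \<and> (\<forall>k::nat. 2 \<le> k \<longrightarrow> (\<exists>\<tau>>0. mse_grad \<tau> N (1 - 1 / real k) < 4)))"
proof (intro conjI allI impI)
  fix \<theta> :: real and N :: nat
  assume "0 < \<theta> \<and> \<theta> < 1 \<and> 1 \<le> N \<and> real N \<le> 1 / (4 * \<theta> * (1 - \<theta>)) - 1"
  then show "\<exists>\<tau>>0. mse_grad \<tau> N \<theta> < mse_rf N \<theta>"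
    using mse_grad_lt_4[of \<theta> N 1] mse_rf_ge_4[of \<theta> N] by (intro exI[of _ 1]) auto
next
  fix N :: nat
  assume N: "1 \<le> N"
  have inner: "0 < 1 / real k \<and> 1 / real k < 1" and outer: "0 < 1 - 1 / real k \<and> 1 - 1 / real k < 1"
    if "2 \<le> k" for k :: nat
    using that by (auto simp: field_simps)
  have small: "\<forall>\<^sub>F k in at_top. 0 < t k \<and> t k < 1 \<and> t k * (1 - t k) \<le> 1 / real k"
    if "t = (\<lambda>k. 1 / real k) \<or> t = (\<lambda>k. 1 - 1 / real k)" for t :: "nat \<Rightarrow> real"
    using eventually_ge_at_top[of "2::nat"]
    by eventually_elim (use that inner outer in \<open>auto simp: field_simps\<close>)
  show "(\<lambda>k. mse_rf N (1 / real k)) \<in> \<Omega>(\<lambda>k. real k)"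
       "(\<lambda>k. mse_rf N (1 - 1 / real k)) \<in> \<Omega>(\<lambda>k. real k)"
    using mse_rf_bigomega[OF N small] by auto
  show "\<exists>\<tau>>0. mse_grad \<tau> N (1 / real k) < 4" "\<exists>\<tau>>0. mse_grad \<tau> N (1 - 1 / real k) < 4"
    if "2 \<le> k" for k
    using mse_grad_lt_4 inner[OF that] outer[OF that] N by (auto intro!: exI[of _ 1])
qed

end
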